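(* Let $\mathcal H$ be a complex Hilbert space and $A,X,B\in\mathcal B(\mathcal H)$ with $X$ positive. Then for all $x,y\in\mathcal H$ with $Bx\neq0$, $$|\langle AXBx,y\rangle|\le\frac{\|X\|}{2}\left(2\|Bx\|\,\|A^*y\|-\frac{\inf_{\lambda\in\mathbb C}\|Bx-\lambda A^*y\|^2}{2\|Bx\|}\,\|A^*y\|\right).$$
   Context: $\|X\|$ is the operator norm. *)

theory Defs
  imports "HOL-Analysis.Analysis"
begin

text \<open>Complex inner product spaces (no such class exists in the distribution).
  The inner product is linear in the first argument, conjugate-linear in the second.\<close>

class complex_inner = real_normed_vector +
  fixes scaleC :: "complex \<Rightarrow> 'a \<Rightarrow> 'a" (infixr "*\<^sub>C" 75)
    and cinner :: "'a \<Rightarrow> 'a \<Rightarrow> complex"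
  assumes scaleC_add_right: "a *\<^sub>C (x + y) = a *\<^sub>C x + a *\<^sub>C y"
    and scaleC_add_left: "(a + b) *\<^sub>C x = a *\<^sub>C x + b *\<^sub>C x"
    and scaleC_scaleC: "a *\<^sub>C (b *\<^sub>C x) = (a * b) *\<^sub>C x"
    and scaleC_one: "1 *\<^sub>C x = x"
    and scaleR_scaleC: "scaleR r x = complex_of_real r *\<^sub>C x"
    and cinner_commute: "cinner x y = cnj (cinner y x)"
    and cinner_add_left: "cinner (x + y) z = cinner x z + cinner y z"
    and cinner_scaleC_left: "cinner (a *\<^sub>C x) y = a * cinner x y"
    and cinner_nonneg: "0 \<le> Re (cinner x x)"
    and cinner_eq_zero_iff: "cinner x x = 0 \<longleftrightarrow> x = 0"
    and norm_eq_sqrt_cinner: "norm x = sqrt (Re (cinner x x))"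

class chilbert_space = complex_inner + complete_space

definition clinear :: "('a::complex_inner \<Rightarrow> 'b::complex_inner) \<Rightarrow> bool" where
  "clinear f \<longleftrightarrow> (\<forall>x y. f (x + y) = f x + f y) \<and> (\<forall>c x. f (c *\<^sub>C x) = c *\<^sub>C f x)"

definition bounded_clinear :: "('a::complex_inner \<Rightarrow> 'b::complex_inner) \<Rightarrow> bool" where
  "bounded_clinear f \<longleftrightarrow> clinear f \<and> (\<exists>K. \<forall>x. norm (f x) \<le> norm x * K)"

definition is_adjoint :: "('a::complex_inner \<Rightarrow> 'a) \<Rightarrow> ('a \<Rightarrow> 'a) \<Rightarrow> bool" where
  "is_adjoint A A' \<longleftrightarrow> (\<forall>x y. cinner (A x) y = cinner x (A' y))"

definition positive_op :: "('a::complex_inner \<Rightarrow> 'a) \<Rightarrow> bool" where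
  "positive_op X \<longleftrightarrow> (\<forall>x. Im (cinner (X x) x) = 0 \<and> 0 \<le> Re (cinner (X x) x))"

end

theory Submission
  imports Defs
begin

(* With u = B x and v = A^* y we have <AXBx, y> = <Xu, v>, and Buzano's inequality for the
   positive operator X gives |<Xu, v>| <= ||X||/2 (||u|| ||v|| + |<u, v>|).  Buzano's inequality
   follows from polarization, 4 Re <Xp, q> = <X(p+q), p+q> - <X(p-q), p-q> <= ||X|| ||p+q||^2,
   applied to rescalings p, q of u, v with ||p|| = ||q|| and <Xp, q> >= 0.  The infimum is at
   most the squared distance from u to its projection onto the line C v, namely
   ||u||^2 - |<u, v>|^2 / ||v||^2; with a = ||u|| ||v|| and c = |<u, v>| the subtracted term is
   therefore at most (a^2 - c^2) / (2a) <= a - c. *)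

lemma cinner_zero_left [simp]: "cinner 0 z = 0"
  using cinner_add_left[of 0 0 z] by simp

lemma cinner_minus_left: "cinner (- x) z = - cinner x z"
  using cinner_add_left[of x "- x" z] by (simp add: add_eq_0_iff)

lemma cinner_diff_left: "cinner (x - y) z = cinner x z - cinner y z"
  using cinner_add_left[of x "- y" z] by (simp add: cinner_minus_left)

lemma cinner_add_right: "cinner z (x + y) = cinner z x + cinner z y"
  by (metis cinner_commute cinner_add_left complex_cnj_add)

lemma cinner_diff_right: "cinner z (x - y) = cinner z x - cinner z y"
  by (metis cinner_commute cinner_diff_left complex_cnj_diff)

lemma cinner_zero_right [simp]: "cinner z 0 = 0"
  by (metis cinner_commute cinner_zero_left complex_cnj_zero)

lemma cinner_scaleC_right: "cinner x (a *\<^sub>C y) = cnj a * cinner x y"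
  by (metis cinner_commute cinner_scaleC_left complex_cnj_mult complex_cnj_cnj)

lemma cinner_self: "cinner x x = complex_of_real ((norm x)\<^sup>2)"
proof -
  have "Im (cinner x x) = 0"
    using arg_cong[OF cinner_commute[of x x], of Im] by simp
  then show ?thesis
    using norm_eq_sqrt_cinner[of x] cinner_nonneg[of x] by (simp add: complex_eq_iff)
qed

lemma power2_norm_eq_cinner: "(norm x)\<^sup>2 = Re (cinner x x)"
  by (simp add: cinner_self)

lemma norm_scaleC: "norm (a *\<^sub>C x) = cmod a * norm x"
proof -
  have "cnj a * a = (complex_of_real (cmod a))\<^sup>2"
    by (metis complex_norm_square mult.commute of_real_power)
  then have "complex_of_real ((norm (a *\<^sub>C x))\<^sup>2) = complex_of_real ((cmod a * norm x)\<^sup>2)"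
    unfolding cinner_self[symmetric] cinner_scaleC_left cinner_scaleC_right
    by (simp add: cinner_self power_mult_distrib mult.assoc)
  then have "(norm (a *\<^sub>C x))\<^sup>2 = (cmod a * norm x)\<^sup>2"
    by (simp only: of_real_eq_iff)
  then show ?thesis
    by (simp add: power2_eq_iff_nonneg)
qed

lemma norm_diff_projection_power2:
  assumes "v \<noteq> 0"
  shows "(norm (u - (cinner u v / cinner v v) *\<^sub>C v))\<^sup>2
    = (norm u)\<^sup>2 - (cmod (cinner u v))\<^sup>2 / (norm v)\<^sup>2"
proof -
  define l where "l = cinner u v / cinner v v"
  have vv: "cinner v v = complex_of_real ((norm v)\<^sup>2)" "cinner v v \<noteq> 0"
    using assms by (simp_all add: cinner_self)
  have "complex_of_real ((norm (u - l *\<^sub>C v))\<^sup>2) = cinner (u - l *\<^sub>C v) (u - l *\<^sub>C v)"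
    by (simp add: cinner_self)
  also have "\<dots> = cinner u u - cnj l * cinner u v - l * cnj (cinner u v) + l * cnj l * cinner v v"
    by (simp add: cinner_diff_left cinner_diff_right cinner_scaleC_left cinner_scaleC_right
        cinner_commute[of v u] algebra_simps)
  also have "\<dots> = cinner u u - cinner u v * cnj (cinner u v) / cinner v v"
    using vv by (simp add: l_def field_simps power2_eq_square)
  also have "\<dots> = complex_of_real ((norm u)\<^sup>2 - (cmod (cinner u v))\<^sup>2 / (norm v)\<^sup>2)"
    using vv by (simp add: cinner_self flip: complex_norm_square)
  finally show ?thesis
    unfolding l_def of_real_eq_iff .
qed

lemma norm_cinner_le: "cmod (cinner u v) \<le> norm u * norm v"
proof (cases "v = 0")
  case False
  then have "(cmod (cinner u v))\<^sup>2 / (norm v)\<^sup>2 \<le> (norm u)\<^sup>2"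
    using norm_diff_projection_power2[of v u] by (metis diff_ge_0_iff_ge zero_le_power2)
  then have "(cmod (cinner u v))\<^sup>2 \<le> (norm u * norm v)\<^sup>2"
    using False by (simp add: field_simps power_mult_distrib)
  then show ?thesis
    by (rule power2_le_imp_le) simp
qed simp

lemma clinear_add: "clinear f \<Longrightarrow> f (x + y) = f x + f y"
  by (simp add: clinear_def)

lemma clinear_scaleC: "clinear f \<Longrightarrow> f (c *\<^sub>C x) = c *\<^sub>C f x"
  by (simp add: clinear_def)

lemma clinear_diff: "clinear f \<Longrightarrow> f (x - y) = f x - f y"
  by (metis clinear_add diff_add_cancel eq_diff_eq)

lemma clinear_zero: "clinear f \<Longrightarrow> f 0 = 0"
  using clinear_diff[of f 0 0] by simp

lemma bounded_clinear_imp_bounded_linear: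
  assumes "bounded_clinear f"
  shows "bounded_linear f"
proof -
  obtain K where "\<And>x. norm (f x) \<le> norm x * K" and "clinear f"
    using assms by (auto simp: bounded_clinear_def)
  then show ?thesis
    by (intro bounded_linear_intro[where K = K]) (simp_all add: clinear_add clinear_scaleC scaleR_scaleC)
qed

lemma positive_op_cinner_commute:
  assumes "clinear X" and "positive_op X"
  shows "cinner (X v) u = cnj (cinner (X u) v)"
proof -
  have real: "Im (cinner (X z) z) = 0" for z
    using assms(2) by (simp add: positive_op_def)
  have "Im (cinner (X (u + c *\<^sub>C v)) (u + c *\<^sub>C v))
      = Im (cinner (X u) u) + Im (cnj c * cinner (X u) v + c * cinner (X v) u)
        + Im (c * cnj c * cinner (X v) v)" for c
    by (simp add: assms(1) clinear_add clinear_scaleC cinner_add_left cinner_add_right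
        cinner_scaleC_left cinner_scaleC_right algebra_simps)
  then have "Im (cnj c * cinner (X u) v + c * cinner (X v) u) = 0" for c
    using real[of u] real[of v] real[of "u + c *\<^sub>C v"] by (simp add: complex_mult_cnj)
  from this[of 1] this[of \<i>] show ?thesis
    by (simp add: complex_eq_iff)
qed

lemma positive_op_Re_cinner_le:
  assumes "clinear X" and "positive_op X" and bound: "\<And>z. norm (X z) \<le> M * norm z"
  shows "Re (cinner (X p) q) \<le> M / 4 * ((norm p)\<^sup>2 + (norm q)\<^sup>2) + M / 2 * Re (cinner p q)"
proof -
  define Q where "Q z = Re (cinner (X z) z)" for z
  have Q_nonneg: "0 \<le> Q z" for z
    using assms(2) by (simp add: Q_def positive_op_def)
  have Q_le: "Q z \<le> M * (norm z)\<^sup>2" for z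
  proof -
    have "Q z \<le> norm (X z) * norm z"
      unfolding Q_def using complex_Re_le_cmod norm_cinner_le order_trans by blast
    also have "\<dots> \<le> M * (norm z)\<^sup>2"
      using mult_right_mono[OF bound[of z] norm_ge_zero[of z]] by (simp add: power2_eq_square mult.assoc)
    finally show ?thesis .
  qed
  have Re_sym: "Re (cinner (X q) p) = Re (cinner (X p) q)" "Re (cinner q p) = Re (cinner p q)"
    using positive_op_cinner_commute[OF assms(1,2), of q p] cinner_commute[of q p] by simp_all
  have "4 * Re (cinner (X p) q) = Q (p + q) - Q (p - q)"
    using Re_sym by (simp add: Q_def assms(1) clinear_add clinear_diff cinner_add_left cinner_add_right
        cinner_diff_left cinner_diff_right)
  also have "\<dots> \<le> M * (norm (p + q))\<^sup>2"
    using Q_le[of "p + q"] Q_nonneg[of "p - q"] by simp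
  also have "\<dots> = M * ((norm p)\<^sup>2 + (norm q)\<^sup>2 + 2 * Re (cinner p q))"
    using Re_sym by (simp add: power2_norm_eq_cinner cinner_add_left cinner_add_right)
  finally show ?thesis
    by (simp add: algebra_simps)
qed

lemma Buzano_inequality:
  assumes "clinear X" and "positive_op X" and bound: "\<And>z. norm (X z) \<le> M * norm z"
    and "M \<ge> 0"
  shows "cmod (cinner (X u) v) \<le> M / 2 * (norm u * norm v + cmod (cinner u v))"
proof (cases "cinner (X u) v = 0")
  case True
  then show ?thesis
    using \<open>M \<ge> 0\<close> by simp
next
  case False
  define z where "z = cinner (X u) v"
  have "u \<noteq> 0" "v \<noteq> 0"
    using False clinear_zero[OF assms(1)] by auto
  then have norm_pos: "norm u > 0" "norm v > 0"
    by simp_all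
  define t where "t = sqrt (norm v / norm u)"
  define \<phi> where "\<phi> = cnj (sgn z)"
  have t: "t > 0" "t\<^sup>2 = norm v / norm u"
    using norm_pos by (simp_all add: t_def)
  have "\<phi> * z = (z * cnj z) /\<^sub>R cmod z"
    by (simp add: \<phi>_def sgn_div_norm mult.commute)
  also have "\<dots> = complex_of_real (cmod z)"
    using False by (simp add: z_def scaleR_conv_of_real power2_eq_square flip: complex_norm_square)
  finally have \<phi>: "cmod \<phi> = 1" "\<phi> * z = complex_of_real (cmod z)"
    using False by (simp_all add: \<phi>_def z_def norm_sgn)
  define p where "p = (\<phi> * complex_of_real t) *\<^sub>C u"
  define q where "q = complex_of_real (1 / t) *\<^sub>C v"
  have "cinner (X p) q = complex_of_real (cmod z)"
    using t \<phi> by (simp add: p_def q_def z_def assms(1) clinear_scaleC cinner_scaleC_left cinner_scaleC_right)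
  moreover have "Re (cinner p q) \<le> cmod (cinner u v)"
    using t \<phi> complex_Re_le_cmod[of "\<phi> * cinner u v"]
    by (simp add: p_def q_def cinner_scaleC_left cinner_scaleC_right norm_mult)
  moreover have "(norm p)\<^sup>2 = t\<^sup>2 * (norm u)\<^sup>2" "(norm q)\<^sup>2 = (norm v)\<^sup>2 / t\<^sup>2"
    using t(1) \<phi>(1) by (simp_all add: p_def q_def norm_scaleC norm_mult norm_divide power_mult_distrib power_divide)
  then have "(norm p)\<^sup>2 = norm u * norm v" "(norm q)\<^sup>2 = norm u * norm v"
    using t norm_pos by (simp_all add: power2_eq_square)
  ultimately show ?thesis
    using positive_op_Re_cinner_le[OF assms(1-3), of p q] mult_left_mono[of _ _ "M / 2"] \<open>M \<ge> 0\<close>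
    by (fastforce simp: z_def algebra_simps)
qed

lemma INF_norm_diff_scaleC_power2_le:
  assumes "v \<noteq> 0"
  shows "(INF l. (norm (u - l *\<^sub>C v))\<^sup>2) \<le> (norm u)\<^sup>2 - (cmod (cinner u v))\<^sup>2 / (norm v)\<^sup>2"
proof -
  have "(INF l. (norm (u - l *\<^sub>C v))\<^sup>2) \<le> (norm (u - (cinner u v / cinner v v) *\<^sub>C v))\<^sup>2"
    by (rule cINF_lower) (auto intro: bdd_belowI[of _ 0])
  then show ?thesis
    using norm_diff_projection_power2[OF assms] by simp
qed

lemma INF_norm_diff_scaleC_term_le:
  assumes "u \<noteq> 0"
  shows "(INF l. (norm (u - l *\<^sub>C v))\<^sup>2) / (2 * norm u) * norm v
    \<le> norm u * norm v - cmod (cinner u v)"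
proof (cases "v = 0")
  case False
  define a where "a = norm u * norm v"
  define c where "c = cmod (cinner u v)"
  have "0 \<le> c" "c \<le> a" "a > 0"
    using assms False norm_cinner_le[of u v] by (simp_all add: a_def c_def)
  have "(INF l. (norm (u - l *\<^sub>C v))\<^sup>2) / (2 * norm u) * norm v
      \<le> ((norm u)\<^sup>2 - c\<^sup>2 / (norm v)\<^sup>2) / (2 * norm u) * norm v"
    using INF_norm_diff_scaleC_power2_le[OF False, of u] assms
    by (simp add: c_def divide_right_mono mult_right_mono)
  also have "\<dots> = (a - c) * (a + c) / (2 * a)"
    using assms False by (simp add: a_def field_simps power2_eq_square)
  also have "\<dots> \<le> a - c"
    using \<open>0 \<le> c\<close> \<open>c \<le> a\<close> \<open>a > 0\<close>
    by (simp add: divide_le_eq mult_left_mono)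
  finally show ?thesis
    by (simp add: a_def c_def)
qed simp

theorem lemma2p7:
  fixes A X B Astar :: "'a::chilbert_space \<Rightarrow> 'a" and x y :: 'a
  assumes "bounded_clinear A" and "bounded_clinear X" and "bounded_clinear B"
    and "is_adjoint A Astar"
    and "positive_op X"
    and "B x \<noteq> 0"
  shows "cmod (cinner (A (X (B x))) y)
    \<le> onorm X / 2 * (2 * norm (B x) * norm (Astar y)
        - (INF l\<in>(UNIV::complex set). (norm (B x - l *\<^sub>C Astar y))\<^sup>2) / (2 * norm (B x)) * norm (Astar y))"
proof -
  have "bounded_linear X"
    using assms(2) by (rule bounded_clinear_imp_bounded_linear)
  then have bound: "\<And>z. norm (X z) \<le> onorm X * norm z" and "onorm X \<ge> 0"
    by (simp_all add: onorm onorm_pos_le)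
  have "clinear X"
    using assms(2) by (simp add: bounded_clinear_def)
  have "cmod (cinner (A (X (B x))) y) = cmod (cinner (X (B x)) (Astar y))"
    using assms(4) by (simp add: is_adjoint_def)
  also have "\<dots> \<le> onorm X / 2 * (norm (B x) * norm (Astar y) + cmod (cinner (B x) (Astar y)))"
    using Buzano_inequality[OF \<open>clinear X\<close> assms(5) bound \<open>onorm X \<ge> 0\<close>] .
  also have "\<dots> \<le> onorm X / 2 * (2 * norm (B x) * norm (Astar y)
        - (INF l. (norm (B x - l *\<^sub>C Astar y))\<^sup>2) / (2 * norm (B x)) * norm (Astar y))"
    using INF_norm_diff_scaleC_term_le[OF assms(6), of "Astar y"] \<open>onorm X \<ge> 0\<close>
    by (intro mult_left_mono) (simp_all add: mult.commute)
  finally show ?thesis .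
qed

end
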